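(* Let $n_0\ge1$, $m\ge0$, $\epsilon>0$, and $g\in C^m(B_{n_0}(\epsilon))$. Define $h$ on $B_{n_0}(\epsilon)$, in polar coordinates $u=r\omega$ ($r\ge0$, $\omega\in S^{n_0-1}$), by $$h(r\omega)=\begin{cases}\frac1r\int_0^rg(s\omega)\,ds,& r\ne0,\\ g(0),& r=0.\end{cases}$$ Then $h\in C^m(B_{n_0}(\epsilon))$, and for every multi-index $\alpha$ with $|\alpha|\le m$, $$(\partial_u^\alpha h)(r\omega)=\begin{cases}\frac1{r^{|\alpha|+1}}\int_0^rs^{|\alpha|}(\partial_u^\alpha g)(s\omega)\,ds,& r\ne0,\\ \frac1{|\alpha|+1}(\partial^\alpha_ug)(0),& r=0.\end{cases}$$
   Context: $B_{n_0}(\epsilon)$ denotes the open Euclidean ball of radius $\epsilon$ centered at $0$ in $\mathbb R^{n_0}$. *)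

theory Defs
  imports "HOL-Analysis.Analysis"
begin

definition partial_deriv :: "'n::finite \<Rightarrow> (real^'n \<Rightarrow> real) \<Rightarrow> real^'n \<Rightarrow> real" where
  "partial_deriv i f x = deriv (\<lambda>t. f (x + t *\<^sub>R axis i 1)) 0"

text \<open>A multi-index alpha with |alpha| = k corresponds to any list of length k
  containing each index i exactly alpha(i) times.\<close>
fun iter_partial :: "'n::finite list \<Rightarrow> (real^'n \<Rightarrow> real) \<Rightarrow> real^'n \<Rightarrow> real" where
  "iter_partial [] f = f"
| "iter_partial (i # ds) f = partial_deriv i (iter_partial ds f)"

definition C_m_on :: "nat \<Rightarrow> (real^'n::finite) set \<Rightarrow> (real^'n \<Rightarrow> real) \<Rightarrow> bool" where
  "C_m_on m U f \<longleftrightarrow>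
     (\<forall>ds. length ds \<le> m \<longrightarrow>
        continuous_on U (iter_partial ds f) \<and>
        (length ds < m \<longrightarrow> (\<forall>i. \<forall>x\<in>U.
            (\<lambda>t. iter_partial ds f (x + t *\<^sub>R axis i 1)) differentiable (at 0))))"

end

theory Submission imports Defs begin

text \<open>The substitution \<open>s = r t\<close> writes the polar average as \<open>h x = \<integral>\<^sub>0\<^sup>1 g (t x) dt\<close>,
  a form that also holds at \<open>x = 0\<close>. Differentiating under the integral sign, the partial
  derivative in direction \<open>i\<close> maps \<open>\<integral>\<^sub>0\<^sup>1 t^k F (t x) dt\<close> to \<open>\<integral>\<^sub>0\<^sup>1 t^(k+1) (\<partial>\<^sub>i F) (t x) dt\<close>;
  by induction \<open>\<partial>\<^sup>\<alpha> h x = \<integral>\<^sub>0\<^sup>1 t^|\<alpha>| (\<partial>\<^sup>\<alpha> g) (t x) dt\<close>, which is continuous, and undoing the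
  substitution gives both formulas.\<close>

definition radial_moment :: "nat \<Rightarrow> ('a::real_vector \<Rightarrow> real) \<Rightarrow> 'a \<Rightarrow> real" where
  "radial_moment k F x = integral {0..1} (\<lambda>t. t ^ k * F (t *\<^sub>R x))"

lemma integral_power_unit_interval: "integral {0..1::real} (\<lambda>t. t ^ k) = 1 / (real k + 1)"
proof -
  have "((\<lambda>t. t ^ k) has_integral (1 ^ Suc k / (real k + 1) - 0 ^ Suc k / (real k + 1))) {0..1::real}"
    apply (rule fundamental_theorem_of_calculus)
     apply simp
    apply (rule has_real_derivative_iff_has_vector_derivative[THEN iffD1])
    apply (rule derivative_eq_intros refl | simp)+
    apply (simp add: field_simps)
    done
  then show ?thesis by (simp add: integral_unique)
qed

lemma integral_rescale_unit_interval:
  fixes f :: "real \<Rightarrow> real"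
  assumes "r > 0"
  shows "integral {0..r} f = r * integral {0..1} (\<lambda>t. f (r * t))"
proof -
  have "integral ((\<lambda>x. x / r) ` {0..r}) (\<lambda>x. f (r * x)) = (1 / \<bar>r\<bar>) *\<^sub>R integral {0..r} f"
    using assms by (intro integral_stretch_real) simp
  moreover have "(\<lambda>x. x / r) ` {0..r} = {0..1}"
    using assms by simp
  ultimately show ?thesis using assms by simp
qed

lemma scaleR_in_ball_zero:
  fixes x :: "'a::real_normed_vector"
  assumes "x \<in> ball 0 e" "t \<in> {0..1}"
  shows "t *\<^sub>R x \<in> ball 0 e"
proof -
  have "norm (t *\<^sub>R x) \<le> norm x"
    using assms(2) by (simp add: mult_left_le_one_le)
  then show ?thesis using assms(1) by simp
qed

lemma radial_moment_at_zero: "radial_moment k F 0 = F 0 / (real k + 1)"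
  by (simp add: radial_moment_def integral_power_unit_interval)

lemma integral_polar_eq_radial_moment:
  assumes "r > 0"
  shows "integral {0..r} (\<lambda>s. s ^ k * F (s *\<^sub>R \<omega>)) = r ^ (k + 1) * radial_moment k F (r *\<^sub>R \<omega>)"
proof -
  have "integral {0..r} (\<lambda>s. s ^ k * F (s *\<^sub>R \<omega>))
      = r * integral {0..1} (\<lambda>t. (r * t) ^ k * F ((r * t) *\<^sub>R \<omega>))"
    using assms by (rule integral_rescale_unit_interval)
  also have "\<dots> = r * integral {0..1} (\<lambda>t. r ^ k * (t ^ k * F (t *\<^sub>R (r *\<^sub>R \<omega>))))"
    by (simp add: power_mult_distrib mult.commute mult.left_commute)
  finally show ?thesis by (simp add: radial_moment_def)
qed

lemma polar_average_eq_radial_moment: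
  fixes g h :: "'a::real_normed_vector \<Rightarrow> real"
  assumes h_polar: "\<forall>r \<omega>. 0 < r \<and> r < e \<and> norm \<omega> = 1 \<longrightarrow>
                     h (r *\<^sub>R \<omega>) = (1 / r) * integral {0..r} (\<lambda>s. g (s *\<^sub>R \<omega>))"
    and h_zero: "h 0 = g 0"
  shows "\<forall>x\<in>ball 0 e. h x = radial_moment 0 g x"
proof
  fix x :: 'a assume x: "x \<in> ball 0 e"
  show "h x = radial_moment 0 g x"
  proof (cases "x = 0")
    case True
    then show ?thesis by (simp add: h_zero radial_moment_at_zero)
  next
    case False
    define \<omega> where "\<omega> = x /\<^sub>R norm x"
    have \<omega>: "norm \<omega> = 1" "norm x *\<^sub>R \<omega> = x" and r: "0 < norm x" "norm x < e"
      using False x by (auto simp: \<omega>_def)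
    have "h x = (1 / norm x) * integral {0..norm x} (\<lambda>s. g (s *\<^sub>R \<omega>))"
      using h_polar \<omega> r by metis
    then show ?thesis
      using integral_polar_eq_radial_moment[OF r(1), of 0 g \<omega>] r(1) \<omega>(2) by simp
  qed
qed

lemma continuous_on_radial_moment:
  fixes F :: "'a::real_normed_vector \<Rightarrow> real"
  assumes "continuous_on (ball 0 e) F"
  shows "continuous_on (ball 0 e) (radial_moment k F)"
proof -
  have "continuous_on (ball 0 e \<times> cbox 0 (1::real)) (\<lambda>p. F (snd p *\<^sub>R fst p))"
    by (rule continuous_on_compose2[OF assms])
       (auto intro!: continuous_intros scaleR_in_ball_zero simp del: mem_ball)
  then have "continuous_on (ball 0 e \<times> cbox 0 1) (\<lambda>(x, t). t ^ k * F (t *\<^sub>R x))"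
    by (auto intro!: continuous_intros simp: case_prod_beta)
  from integral_continuous_on_param[OF this] show ?thesis
    by (simp add: radial_moment_def[abs_def])
qed

lemma has_field_derivative_radial_moment_axis:
  fixes F :: "real^'n \<Rightarrow> real"
  assumes contF: "continuous_on (ball 0 e) F"
    and diffF: "\<forall>y\<in>ball 0 e. (\<lambda>u. F (y + u *\<^sub>R axis i 1)) differentiable (at 0)"
    and contDF: "continuous_on (ball 0 e) (partial_deriv i F)"
    and x: "x \<in> ball 0 e"
  shows "((\<lambda>s. radial_moment k F (x + s *\<^sub>R axis i 1))
          has_field_derivative radial_moment (Suc k) (partial_deriv i F) x) (at 0)"
proof -
  obtain d where "d > 0" and d: "ball x d \<subseteq> ball 0 e"
    using x openE[OF open_ball] by metis
  define U where "U = ball (0::real) d"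
  have U: "0 \<in> U" "convex U" "open U"
    using \<open>d > 0\<close> by (auto simp: U_def)
  have in_ball: "t *\<^sub>R (x + s *\<^sub>R axis i 1) \<in> ball 0 e" if "s \<in> U" "t \<in> {0..1}" for s t
  proof -
    have "x + s *\<^sub>R axis i 1 \<in> ball x d"
      using that(1) by (simp add: U_def dist_norm norm_axis_1)
    then show ?thesis using d that(2) scaleR_in_ball_zero by blast
  qed
  have deriv_integrand:
    "((\<lambda>s. t ^ k * F (t *\<^sub>R (x + s *\<^sub>R axis i 1))) has_field_derivative
       t ^ Suc k * partial_deriv i F (t *\<^sub>R (x + s *\<^sub>R axis i 1))) (at s within U)"
    if "s \<in> U" "t \<in> cbox 0 1" for s t
  proof -
    define y where "y = t *\<^sub>R (x + s *\<^sub>R axis i 1)"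
    have "((\<lambda>u. F (y + u *\<^sub>R axis i 1)) has_field_derivative partial_deriv i F y) (at 0)"
      using diffF in_ball[of s t] that
      by (simp add: y_def partial_deriv_def DERIV_deriv_iff_real_differentiable)
    moreover have "((\<lambda>s'. t * (s' - s)) has_field_derivative t) (at s)"
      by (auto intro!: derivative_eq_intros)
    ultimately have "((\<lambda>s'. F (y + (t * (s' - s)) *\<^sub>R axis i 1)) has_field_derivative partial_deriv i F y * t) (at s)"
      using DERIV_chain2[where f="\<lambda>u. F (y + u *\<^sub>R axis i 1)" and g="\<lambda>s'. t * (s' - s)"]
      by simp
    moreover have "y + (t * (s' - s)) *\<^sub>R axis i 1 = t *\<^sub>R (x + s' *\<^sub>R axis i 1)" for s'
      by (simp add: y_def algebra_simps)
    ultimately have "((\<lambda>s'. F (t *\<^sub>R (x + s' *\<^sub>R axis i 1))) has_field_derivative partial_deriv i F y * t) (at s)"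
      by simp
    from DERIV_cmult[OF this, of "t ^ k"] show ?thesis
      by (simp add: y_def mult_ac has_field_derivative_at_within)
  qed
  have integrable: "(\<lambda>t. t ^ k * F (t *\<^sub>R (x + s *\<^sub>R axis i 1))) integrable_on cbox 0 1"
    if "s \<in> U" for s
  proof -
    have "continuous_on {0..1} (\<lambda>t. F (t *\<^sub>R (x + s *\<^sub>R axis i 1)))"
      by (rule continuous_on_compose2[OF contF]) (use in_ball that in \<open>auto intro!: continuous_intros\<close>)
    then show ?thesis
      by (auto intro!: continuous_intros integrable_continuous_real)
  qed
  have "continuous_on (U \<times> cbox 0 (1::real)) (\<lambda>p. partial_deriv i F (snd p *\<^sub>R (x + fst p *\<^sub>R axis i 1)))"
    by (rule continuous_on_compose2[OF contDF]) (use in_ball in \<open>auto intro!: continuous_intros\<close>)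
  then have "continuous_on (U \<times> cbox 0 1)
      (\<lambda>(s, t). t ^ Suc k * partial_deriv i F (t *\<^sub>R (x + s *\<^sub>R axis i 1)))"
    by (auto intro!: continuous_intros simp: case_prod_beta)
  from leibniz_rule_field_derivative[OF deriv_integrand integrable this U(1,2)]
  have "((\<lambda>s. radial_moment k F (x + s *\<^sub>R axis i 1))
          has_field_derivative radial_moment (Suc k) (partial_deriv i F) x) (at 0 within U)"
    by (simp add: radial_moment_def)
  then show ?thesis
    using at_within_open[OF U(1,3)] by simp
qed

lemma eventually_axis_shift_in_open:
  fixes x :: "real^'n"
  assumes "open S" "x \<in> S"
  shows "eventually (\<lambda>u. x + u *\<^sub>R axis i 1 \<in> S) (nhds 0)"
proof -
  have "isCont (\<lambda>u::real. x + u *\<^sub>R axis i 1) 0"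
    by (intro continuous_intros)
  then have "((\<lambda>u. x + u *\<^sub>R axis i 1) \<longlongrightarrow> x) (nhds 0)"
    by (simp add: isCont_def tendsto_nhds_iff)
  then show ?thesis
    using assms by (simp add: tendsto_def)
qed

lemma has_field_derivative_radial_representation:
  fixes g h :: "real^'n \<Rightarrow> real"
  assumes g: "C_m_on m (ball 0 e) g"
    and ds: "length ds < m"
    and rep: "\<forall>x\<in>ball 0 e. iter_partial ds h x = radial_moment (length ds) (iter_partial ds g) x"
    and x: "x \<in> ball 0 e"
  shows "((\<lambda>u. iter_partial ds h (x + u *\<^sub>R axis i 1))
          has_field_derivative radial_moment (length (i # ds)) (iter_partial (i # ds) g) x) (at 0)"
proof -
  have cont: "continuous_on (ball 0 e) (iter_partial ds g)"
    and cont': "continuous_on (ball 0 e) (partial_deriv i (iter_partial ds g))"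
    and diff: "\<forall>y\<in>ball 0 e. (\<lambda>u. iter_partial ds g (y + u *\<^sub>R axis i 1)) differentiable (at 0)"
    using g ds unfolding C_m_on_def
    by (auto dest: spec[of _ ds] spec[of _ "i # ds"])
  have "eventually (\<lambda>u. iter_partial ds h (x + u *\<^sub>R axis i 1)
      = radial_moment (length ds) (iter_partial ds g) (x + u *\<^sub>R axis i 1)) (nhds 0)"
    using eventually_axis_shift_in_open[OF open_ball x] by eventually_elim (use rep in auto)
  moreover have "((\<lambda>u. radial_moment (length ds) (iter_partial ds g) (x + u *\<^sub>R axis i 1))
      has_field_derivative radial_moment (length (i # ds)) (iter_partial (i # ds) g) x) (at 0)"
    using has_field_derivative_radial_moment_axis[OF cont diff cont' x] by simp
  ultimately show ?thesis
    by (rule DERIV_cong_ev[OF refl _ refl, THEN iffD2])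
qed

lemma iter_partial_radial_average:
  fixes g h :: "real^'n \<Rightarrow> real"
  assumes g: "C_m_on m (ball 0 e) g"
    and h: "\<forall>x\<in>ball 0 e. h x = radial_moment 0 g x"
    and ds: "length ds \<le> m"
  shows "\<forall>x\<in>ball 0 e. iter_partial ds h x = radial_moment (length ds) (iter_partial ds g) x"
  using ds
proof (induction ds)
  case Nil
  then show ?case using h by simp
next
  case (Cons i ds)
  then have "length ds < m" by simp
  note derivative = has_field_derivative_radial_representation[OF g this Cons.IH[OF less_imp_le[OF this]]]
  show ?case
  proof
    fix x :: "real^'n" assume "x \<in> ball 0 e"
    from derivative[OF this, of i, THEN DERIV_imp_deriv]
    show "iter_partial (i # ds) h x = radial_moment (length (i # ds)) (iter_partial (i # ds) g) x"
      using Cons.prems by (simp add: partial_deriv_def)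
  qed
qed

lemma C_m_on_radial_average:
  fixes g h :: "real^'n \<Rightarrow> real"
  assumes g: "C_m_on m (ball 0 e) g"
    and h: "\<forall>x\<in>ball 0 e. h x = radial_moment 0 g x"
  shows "C_m_on m (ball 0 e) h"
  unfolding C_m_on_def
proof (intro allI impI conjI ballI)
  fix ds :: "'n list" assume "length ds \<le> m"
  with iter_partial_radial_average[OF g h] g show "continuous_on (ball 0 e) (iter_partial ds h)"
    unfolding C_m_on_def by (metis continuous_on_cong continuous_on_radial_moment)
next
  fix ds :: "'n list" and i and x :: "real^'n" assume ds: "length ds < m" and x: "x \<in> ball 0 e"
  from has_field_derivative_radial_representation
      [OF g ds iter_partial_radial_average[OF g h less_imp_le[OF ds]] x]
  show "(\<lambda>u. iter_partial ds h (x + u *\<^sub>R axis i 1)) differentiable (at 0)"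
    using real_differentiable_def by blast
qed

theorem lemma3p11:
  fixes g h :: "real^'n \<Rightarrow> real" and m :: nat and \<epsilon> :: real
  assumes eps: "\<epsilon> > 0"
    and g: "C_m_on m (ball 0 \<epsilon>) g"
    and h_polar: "\<forall>r \<omega>. 0 < r \<and> r < \<epsilon> \<and> norm \<omega> = 1 \<longrightarrow>
                     h (r *\<^sub>R \<omega>) = (1 / r) * integral {0..r} (\<lambda>s. g (s *\<^sub>R \<omega>))"
    and h_zero: "h 0 = g 0"
  shows "C_m_on m (ball 0 \<epsilon>) h \<and>
    (\<forall>ds. length ds \<le> m \<longrightarrow>
       (\<forall>r \<omega>. 0 < r \<and> r < \<epsilon> \<and> norm \<omega> = 1 \<longrightarrow>
          iter_partial ds h (r *\<^sub>R \<omega>) =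
            (1 / r ^ (length ds + 1)) *
              integral {0..r} (\<lambda>s. s ^ length ds * iter_partial ds g (s *\<^sub>R \<omega>))) \<and>
       iter_partial ds h 0 = (1 / (real (length ds) + 1)) * iter_partial ds g 0)"
proof (intro conjI allI impI)
  have h: "\<forall>x\<in>ball 0 \<epsilon>. h x = radial_moment 0 g x"
    using h_polar h_zero by (rule polar_average_eq_radial_moment)
  show "C_m_on m (ball 0 \<epsilon>) h"
    using g h by (rule C_m_on_radial_average)
  fix ds :: "'n list" assume ds: "length ds \<le> m"
  note rep = iter_partial_radial_average[OF g h ds]
  show "iter_partial ds h 0 = (1 / (real (length ds) + 1)) * iter_partial ds g 0"
    using rep eps by (simp add: radial_moment_at_zero)
  fix r :: real and \<omega> :: "real^'n" assume r\<omega>: "0 < r \<and> r < \<epsilon> \<and> norm \<omega> = 1"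
  then have "r *\<^sub>R \<omega> \<in> ball 0 \<epsilon>" by simp
  with rep r\<omega> integral_polar_eq_radial_moment[of r "length ds" "iter_partial ds g" \<omega>]
  show "iter_partial ds h (r *\<^sub>R \<omega>) =
      (1 / r ^ (length ds + 1)) * integral {0..r} (\<lambda>s. s ^ length ds * iter_partial ds g (s *\<^sub>R \<omega>))"
    by simp
qed

end
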